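(* Let $n,m\in\mathbb{N}$, $f,g:\mathbb{F}_2^n\to\mathbb{F}_2$, $\mathbf{y}\in\mathbb{F}_2^n$, and let $h(\mathbf{x})=\mathbf{x}\cdot\mathbf{y}$. Then: (i) when $A^{(m)3,3}_n(h,f,g)$ is executed, the probability of measuring the all-zero state $\ket{0^n}$ is $2^{-2n}|C^{(m)}_{f,g}(\mathbf{y})|^2$; (ii) when $A^{(m)2,3}_n(h,f,g)$ is executed, the probability of measuring the driving qubit in state $\ket{0}$ is $\frac12\left(1+\Re\left(2^{-n}\zeta_m^{-wt(\mathbf{y})}C^{(m)}_{f,g}(\mathbf{y})\right)\right)$.
   Context: $\zeta_m=e^{2\pi i/m}$, $\overline{\zeta_m}$ its conjugate; $wt$ is Hamming weight; $\mathbf{x}\cdot\mathbf{y}=\bigoplus_i x_iy_i$; $\mathbf{x}\odot\mathbf{y}=\sum_ix_iy_i$ in the integers. $m$-crosscorrelation: $C^{(m)}_{f,g}(\mathbf{y})=\sum_{\mathbf{x}}(-1)^{f(\mathbf{x})\oplus g(\mathbf{x}\oplus\mathbf{y})}(\zeta_m^2)^{\mathbf{x}\odot\mathbf{y}}$. Gates: $\mathrm{H}$ Hadamard; $\Omega_m=\frac{1}{\sqrt2}\begin{pmatrix}1&\zeta_m\\1&-\zeta_m\end{pmatrix}$; $\overline{\Omega}_m=\frac{1}{\sqrt2}\begin{pmatrix}1&\overline{\zeta_m}\\1&-\overline{\zeta_m}\end{pmatrix}$; $\mathrm{S}_m=\mathrm{diag}(1,\zeta_m)$; $U_f$ is the phase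 oracle $\ket{\mathbf{x}}\mapsto(-1)^{f(\mathbf{x})}\ket{\mathbf{x}}$. Algorithm $A^{(m)3,3}_n(f_1,f_2,f_3)$: from $\ket{0^n}$ apply in order $\mathrm{H}^{\otimes n}$, $U_{f_2}$, $\Omega_m^{\otimes n}$, $U_{f_1}$, $\mathrm{H}^{\otimes n}$, $U_{f_3}$, $\overline{\Omega}_m^{\otimes n}$, then measure all qubits. Algorithm $A^{(m)2,3}_n(f_1,f_2,f_3)$: driving qubit in $\ket{+}$, $n$-qubit register in $\ket{0^n}$; apply $\mathrm{H}^{\otimes n}$ to the register; controlled on driving qubit $\ket{0}$ apply $U_{f_2}$, $\Omega_m^{\otimes n}$, $U_{f_1}$, $\mathrm{H}^{\otimes n}$ in order; controlled on driving qubit $\ket{1}$ apply $\mathrm{S}_m^{\otimes n}$, $U_{f_3}$ in order; apply $\mathrm{H}$ to the driving qubit and measure it. *)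

theory Defs
  imports Complex_Main
begin

text \<open>Bit strings of length n model F_2^n; quantum states on n qubits are
  amplitude functions on bit strings (only values on length-n lists matter).\<close>

definition bitstr :: "nat \<Rightarrow> bool list set" where
  "bitstr n = {xs. length xs = n}"

definition xorv :: "bool list \<Rightarrow> bool list \<Rightarrow> bool list" where
  "xorv x y = map2 (\<noteq>) x y"

definition idot :: "bool list \<Rightarrow> bool list \<Rightarrow> nat" where
  "idot x y = length (filter id (map2 (\<and>) x y))"

definition bdot :: "bool list \<Rightarrow> bool list \<Rightarrow> bool" where
  "bdot x y = odd (idot x y)"

definition wt :: "bool list \<Rightarrow> nat" where
  "wt x = length (filter id x)"

definition zeta :: "nat \<Rightarrow> complex" where
  "zeta m = exp (2 * pi * \<i> / of_nat m)"

definition sgnb :: "bool \<Rightarrow> complex" where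
  "sgnb b = (if b then -1 else 1)"

definition crosscorr :: "nat \<Rightarrow> nat \<Rightarrow> (bool list \<Rightarrow> bool) \<Rightarrow> (bool list \<Rightarrow> bool) \<Rightarrow> bool list \<Rightarrow> complex" where
  "crosscorr n m f g y =
     (\<Sum>x\<in>bitstr n. sgnb (f x \<noteq> g (xorv x y)) * (zeta m ^ 2) ^ idot x y)"

type_synonym state = "bool list \<Rightarrow> complex"
text \<open>single-qubit gate: gate out in = matrix entry (row out, column in)\<close>
type_synonym gate = "bool \<Rightarrow> bool \<Rightarrow> complex"

definition hadamard :: gate where
  "hadamard a b = (if a \<and> b then -1 else 1) / of_real (sqrt 2)"

definition omega :: "nat \<Rightarrow> gate" where
  "omega m a b = (if b then (if a then - zeta m else zeta m) else 1) / of_real (sqrt 2)"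

definition omega_bar :: "nat \<Rightarrow> gate" where
  "omega_bar m a b = (if b then (if a then - cnj (zeta m) else cnj (zeta m)) else 1) / of_real (sqrt 2)"

definition sgate :: "nat \<Rightarrow> gate" where
  "sgate m a b = (if a = b then (if a then zeta m else 1) else 0)"

definition tensor_apply :: "nat \<Rightarrow> gate \<Rightarrow> state \<Rightarrow> state" where
  "tensor_apply n U \<psi> = (\<lambda>x. \<Sum>z\<in>bitstr n. (\<Prod>i<n. U (x ! i) (z ! i)) * \<psi> z)"

definition phase_oracle :: "(bool list \<Rightarrow> bool) \<Rightarrow> state \<Rightarrow> state" where
  "phase_oracle f \<psi> = (\<lambda>x. sgnb (f x) * \<psi> x)"

definition ket0 :: "nat \<Rightarrow> state" where
  "ket0 n = (\<lambda>x. if x = replicate n False then 1 else 0)"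

definition A33_state :: "nat \<Rightarrow> nat \<Rightarrow> (bool list \<Rightarrow> bool) \<Rightarrow> (bool list \<Rightarrow> bool) \<Rightarrow> (bool list \<Rightarrow> bool) \<Rightarrow> state" where
  "A33_state m n f1 f2 f3 =
     tensor_apply n (omega_bar m)
      (phase_oracle f3
       (tensor_apply n hadamard
        (phase_oracle f1
         (tensor_apply n (omega m)
          (phase_oracle f2
           (tensor_apply n hadamard (ket0 n)))))))"

definition meas_prob :: "nat \<Rightarrow> state \<Rightarrow> bool list \<Rightarrow> real" where
  "meas_prob n \<psi> x = (cmod (\<psi> x))\<^sup>2"

text \<open>Joint states of driving qubit and n-qubit register.\<close>
type_synonym jstate = "bool \<Rightarrow> bool list \<Rightarrow> complex"

definition controlled :: "bool \<Rightarrow> (state \<Rightarrow> state) \<Rightarrow> jstate \<Rightarrow> jstate" where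
  "controlled b U \<Psi> = (\<lambda>c. if c = b then U (\<Psi> c) else \<Psi> c)"

definition reg_apply :: "(state \<Rightarrow> state) \<Rightarrow> jstate \<Rightarrow> jstate" where
  "reg_apply U \<Psi> = (\<lambda>c. U (\<Psi> c))"

definition drive_apply :: "gate \<Rightarrow> jstate \<Rightarrow> jstate" where
  "drive_apply U \<Psi> = (\<lambda>c x. \<Sum>d\<in>UNIV. U c d * \<Psi> d x)"

definition ket_plus_ket0 :: "nat \<Rightarrow> jstate" where
  "ket_plus_ket0 n = (\<lambda>c x. ket0 n x / of_real (sqrt 2))"

definition A23_state :: "nat \<Rightarrow> nat \<Rightarrow> (bool list \<Rightarrow> bool) \<Rightarrow> (bool list \<Rightarrow> bool) \<Rightarrow> (bool list \<Rightarrow> bool) \<Rightarrow> jstate" where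
  "A23_state m n f1 f2 f3 =
     drive_apply hadamard
      (controlled True (\<lambda>\<psi>. phase_oracle f3 (tensor_apply n (sgate m) \<psi>))
       (controlled False (\<lambda>\<psi>. tensor_apply n hadamard (phase_oracle f1
                                  (tensor_apply n (omega m) (phase_oracle f2 \<psi>))))
        (reg_apply (tensor_apply n hadamard) (ket_plus_ket0 n))))"

definition drive_prob :: "nat \<Rightarrow> jstate \<Rightarrow> bool \<Rightarrow> real" where
  "drive_prob n \<Psi> b = (\<Sum>x\<in>bitstr n. (cmod (\<Psi> b x))\<^sup>2)"

end

(* On one qubit, H diag(1, (-1)^c) Omega is the
   phased shift |t> -> zeta^t |t xor c>, so in A^{3,3} the layers H^n U_h Omega^n send the
   uniform superposition to the amplitudes (-1)^f(w xor y) zeta^wt(w xor y), and the amplitude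
   of |0^n> is 2^-n times the sum over w of the cross terms
     (-1)^(f(w xor y) + g(w)) zeta^wt(w xor y) conj(zeta)^wt(w).
   The bitwise identity 2 ((w xor y) . y) + wt w = wt y + wt (w xor y) (in the integers) turns
   this sum into zeta^-wt(y) C_{f,g}(y). In A^{2,3} the two controlled branches produce the
   unimodular amplitudes a_w = (-1)^f(w xor y) zeta^wt(w xor y) and b_w = (-1)^g(w) zeta^wt(w),
   and the final Hadamard on the driving qubit makes the probability of |0> an average of
   |a_w + b_w|^2 = 2 + 2 Re (a_w conj b_w), i.e. of the same cross terms. *)

theory Submission
  imports Defs
begin

lemma bitstr_Suc: "bitstr (Suc n) = (\<lambda>(b, z). b # z) ` (UNIV \<times> bitstr n)"
  by (auto simp: bitstr_def length_Suc_conv)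

lemma inj_on_Cons_pair: "inj_on (\<lambda>(b, z). b # z) A"
  by (auto simp: inj_on_def)

lemma finite_bitstr: "finite (bitstr n)"
  by (induction n) (simp_all add: bitstr_Suc, simp add: bitstr_def)

lemma card_bitstr: "card (bitstr n) = 2 ^ n"
  by (induction n)
     (simp_all add: bitstr_Suc card_image[OF inj_on_Cons_pair] card_cartesian_product,
      simp add: bitstr_def)

lemma sum_bitstr_prod:
  "(\<Sum>z\<in>bitstr n. \<Prod>i<n. F i (z ! i))
     = (\<Prod>i<n. \<Sum>b\<in>UNIV. F i b :: 'a::comm_semiring_1)"
proof (induction n arbitrary: F)
  case 0
  then show ?case by (simp add: bitstr_def)
next
  case (Suc n)
  have "(\<Sum>z\<in>bitstr (Suc n). \<Prod>i<Suc n. F i (z ! i))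
      = (\<Sum>(b, z)\<in>UNIV \<times> bitstr n. F 0 b * (\<Prod>i<n. F (Suc i) (z ! i)))"
    unfolding bitstr_Suc
    by (subst sum.reindex[OF inj_on_Cons_pair])
       (simp add: case_prod_beta prod.lessThan_Suc_shift del: prod.lessThan_Suc)
  also have "\<dots> = (\<Sum>b\<in>UNIV. F 0 b * (\<Prod>i<n. \<Sum>b\<in>UNIV. F (Suc i) b))"
    by (simp add: sum.cartesian_product[symmetric] sum_distrib_left[symmetric]
        Suc.IH[of "\<lambda>i. F (Suc i)"])
  also have "\<dots> = (\<Prod>i<Suc n. \<Sum>b\<in>UNIV. F i b)"
    by (simp add: prod.lessThan_Suc_shift sum_distrib_right del: prod.lessThan_Suc)
  finally show ?case .
qed

lemma prod_nth_eq_delta: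
  assumes "length z = n" "length v = n"
  shows "(\<Prod>i<n. if z ! i = v ! i then a i else (0::'a::comm_semiring_1))
       = (if z = v then \<Prod>i<n. a i else 0)"
proof (cases "z = v")
  case False
  then obtain j where "j < n" "z ! j \<noteq> v ! j" using assms nth_equalityI by metis
  then show ?thesis using False by (subst prod_zero) auto
qed simp

lemma length_xorv: "length (xorv w y) = min (length w) (length y)"
  by (simp add: xorv_def)

lemma nth_xorv: "i < length w \<Longrightarrow> i < length y \<Longrightarrow> xorv w y ! i = (w ! i \<noteq> y ! i)"
  by (simp add: xorv_def)

lemma xorv_xorv: "length w = length y \<Longrightarrow> xorv (xorv w y) y = w"
  by (rule nth_equalityI) (auto simp: xorv_def)

lemma power_length_filter:
  "c ^ length (filter P xs) = (\<Prod>i<length xs. if P (xs ! i) then c else 1)"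
  by (induction xs) (simp_all add: prod.lessThan_Suc_shift del: prod.lessThan_Suc)

lemma power_wt: "c ^ wt x = (\<Prod>i<length x. if x ! i then c else 1)"
  using power_length_filter[of c id x] by (simp add: wt_def)

lemma power_idot:
  "length x = length y \<Longrightarrow> c ^ idot x y = (\<Prod>i<length x. if x ! i \<and> y ! i then c else 1)"
  using power_length_filter[of c id "map2 (\<and>) x y"] by (simp add: idot_def)

lemma sgnb_bdot: "sgnb (bdot x y) = (- 1) ^ idot x y"
  by (simp add: sgnb_def bdot_def)

lemma idot_xorv_wt:
  "length w = length y \<Longrightarrow> 2 * idot (xorv w y) y + wt w = wt y + wt (xorv w y)"
  by (induction w y rule: list_induct2) (auto simp: idot_def wt_def xorv_def)

lemma sgnb_xor: "sgnb (a \<noteq> b) = sgnb a * sgnb b"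
  by (simp add: sgnb_def)

lemma norm_sgnb [simp]: "cmod (sgnb b) = 1"
  by (simp add: sgnb_def)

lemma cnj_sgnb [simp]: "cnj (sgnb b) = sgnb b"
  by (simp add: sgnb_def)

lemma norm_zeta [simp]: "cmod (zeta m) = 1"
  by (simp add: zeta_def norm_exp_eq_Re)

lemma zeta_mult_cnj [simp]: "zeta m * cnj (zeta m) = 1"
  using complex_norm_square[of "zeta m"] by simp

lemma zeta_nonzero: "zeta m \<noteq> 0"
  by (simp add: zeta_def)

lemma norm_add_sq_unit:
  assumes "cmod a = 1" "cmod b = 1"
  shows "(cmod (a + b))\<^sup>2 = 2 + 2 * Re (a * cnj b)"
  using cmod_power2[of a] cmod_power2[of b] assms
  by (simp add: cmod_power2 power2_sum algebra_simps)

definition inv_sqrt2 :: complex where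
  "inv_sqrt2 = 1 / of_real (sqrt 2)"

lemma inv_sqrt2_sq: "inv_sqrt2 * inv_sqrt2 = 1 / 2"
  by (simp add: inv_sqrt2_def flip: of_real_mult)

lemma norm_inv_sqrt2_power_sq: "(cmod (inv_sqrt2 ^ k))\<^sup>2 = (1 / 2) ^ k"
proof -
  have "(cmod inv_sqrt2)\<^sup>2 = 1 / 2"
    by (simp add: inv_sqrt2_def norm_divide power_divide)
  then show ?thesis
    by (metis norm_power power_mult mult.commute)
qed

lemma phase_oracle_apply [simp]: "phase_oracle f \<psi> x = sgnb (f x) * \<psi> x"
  by (simp add: phase_oracle_def)

lemma tensor_apply_scale:
  "tensor_apply n U (\<lambda>x. a * \<psi> x) = (\<lambda>x. a * tensor_apply n U \<psi> x)"
  by (simp add: tensor_apply_def sum_distrib_left mult_ac)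

lemma tensor_hadamard_ket0: "tensor_apply n hadamard (ket0 n) = (\<lambda>_. inv_sqrt2 ^ n)"
proof
  fix x
  have "tensor_apply n hadamard (ket0 n) x
      = (\<Sum>z\<in>bitstr n. if z = replicate n False then \<Prod>i<n. hadamard (x ! i) (z ! i) else 0)"
    unfolding tensor_apply_def ket0_def by (rule sum.cong) auto
  also have "\<dots> = inv_sqrt2 ^ n"
    by (subst sum.delta[OF finite_bitstr]) (simp add: bitstr_def hadamard_def inv_sqrt2_def)
  finally show "tensor_apply n hadamard (ket0 n) x = inv_sqrt2 ^ n" .
qed

lemma tensor_sgate_const:
  assumes "length w = n"
  shows "tensor_apply n (sgate m) (\<lambda>_. c) w = c * zeta m ^ wt w"
proof -
  have "tensor_apply n (sgate m) (\<lambda>_. c) w = c * (\<Sum>z\<in>bitstr n. \<Prod>i<n. sgate m (w ! i) (z ! i))"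
    by (simp add: tensor_apply_def sum_distrib_left mult_ac)
  also have "\<dots> = c * zeta m ^ wt w"
    using assms by (subst sum_bitstr_prod) (auto simp: sgate_def UNIV_bool power_wt intro!: prod.cong)
  finally show ?thesis .
qed

lemma tensor_omega_bar_at_zero:
  "tensor_apply n (omega_bar m) \<psi> (replicate n False)
   = (\<Sum>w\<in>bitstr n. inv_sqrt2 ^ n * cnj (zeta m) ^ wt w * \<psi> w)"
  unfolding tensor_apply_def
proof (rule sum.cong[OF refl])
  fix w assume "w \<in> bitstr n"
  then have "(\<Prod>i<n. omega_bar m (replicate n False ! i) (w ! i))
      = (\<Prod>i<n. inv_sqrt2 * (if w ! i then cnj (zeta m) else 1))"
    by (intro prod.cong) (auto simp: omega_bar_def inv_sqrt2_def)
  also have "\<dots> = inv_sqrt2 ^ n * cnj (zeta m) ^ wt w"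
    using \<open>w \<in> bitstr n\<close> by (simp add: prod.distrib power_wt bitstr_def)
  finally show "(\<Prod>i<n. omega_bar m (replicate n False ! i) (w ! i)) * \<psi> w
      = inv_sqrt2 ^ n * cnj (zeta m) ^ wt w * \<psi> w" by simp
qed

lemma hadamard_phase_omega_qubit:
  "(\<Sum>b\<in>UNIV. hadamard a b * (if b \<and> c then -1 else 1) * omega m b t)
   = (if t = (a \<noteq> c) then (if t then zeta m else 1) else 0)"
proof -
  have "complex_of_real (sqrt 2) * complex_of_real (sqrt 2) = 2"
    by (simp flip: of_real_mult)
  then show ?thesis
    by (cases a; cases c; cases t) (simp_all add: UNIV_bool hadamard_def omega_def field_simps)
qed

lemma tensor_hadamard_bdot_omega_const:
  assumes "length w = n" "length y = n"
  shows "tensor_apply n hadamard (phase_oracle (\<lambda>x. bdot x y)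
           (tensor_apply n (omega m) (phase_oracle f (\<lambda>_. c)))) w
       = c * sgnb (f (xorv w y)) * zeta m ^ wt (xorv w y)"
proof -
  let ?B = "bitstr n"
  let ?v = "xorv w y"
  let ?G = "\<lambda>z i b. hadamard (w ! i) b * (if b \<and> y ! i then -1 else 1) * omega m b (z ! i)"
  have lv: "length ?v = n" using assms by (simp add: length_xorv)
  have "tensor_apply n hadamard (phase_oracle (\<lambda>x. bdot x y)
           (tensor_apply n (omega m) (phase_oracle f (\<lambda>_. c)))) w
      = (\<Sum>x\<in>?B. \<Sum>z\<in>?B. sgnb (f z) * c * (\<Prod>i<n. ?G z i (x ! i)))"
    unfolding tensor_apply_def phase_oracle_def
    by (intro sum.cong refl)
       (use assms in \<open>simp add: sum_distrib_left sgnb_bdot power_idot bitstr_def prod.distrib mult_ac\<close>)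
  also have "\<dots> = (\<Sum>z\<in>?B. sgnb (f z) * c * (\<Prod>i<n. \<Sum>b\<in>UNIV. ?G z i b))"
    by (subst sum.swap) (simp add: sum_distrib_left[symmetric] sum_bitstr_prod[of "?G _"])
  also have "\<dots> = (\<Sum>z\<in>?B. sgnb (f z) * c *
      (\<Prod>i<n. if z ! i = ?v ! i then (if ?v ! i then zeta m else 1) else 0))"
    by (intro sum.cong prod.cong refl arg_cong2[where f="(*)"])
       (use assms in \<open>auto simp: hadamard_phase_omega_qubit nth_xorv\<close>)
  also have "\<dots> = (\<Sum>z\<in>?B. if z = ?v then sgnb (f ?v) * c * zeta m ^ wt ?v else 0)"
    by (intro sum.cong refl) (use lv in \<open>simp add: prod_nth_eq_delta power_wt bitstr_def\<close>)
  also have "\<dots> = c * sgnb (f ?v) * zeta m ^ wt ?v"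
    using lv by (subst sum.delta[OF finite_bitstr]) (simp add: bitstr_def mult_ac)
  finally show ?thesis .
qed

definition cross_term ::
    "nat \<Rightarrow> (bool list \<Rightarrow> bool) \<Rightarrow> (bool list \<Rightarrow> bool) \<Rightarrow> bool list \<Rightarrow> bool list \<Rightarrow> complex"
  where "cross_term m f g y w =
    sgnb (f (xorv w y)) * zeta m ^ wt (xorv w y) * cnj (sgnb (g w) * zeta m ^ wt w)"

lemma crosscorr_eq_sum_cross_term:
  assumes "length y = n"
  shows "crosscorr n m f g y = zeta m ^ wt y * (\<Sum>w\<in>bitstr n. cross_term m f g y w)"
proof -
  have "crosscorr n m f g y
      = (\<Sum>w\<in>bitstr n. sgnb (f (xorv w y) \<noteq> g w) * zeta m ^ (2 * idot (xorv w y) y))"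
    unfolding crosscorr_def
    by (rule sum.reindex_bij_witness[of _ "\<lambda>w. xorv w y" "\<lambda>w. xorv w y"])
       (use assms in \<open>auto simp: bitstr_def xorv_xorv length_xorv power_mult\<close>)
  also have "\<dots> = (\<Sum>w\<in>bitstr n. zeta m ^ wt y * cross_term m f g y w)"
  proof (intro sum.cong refl)
    fix w assume "w \<in> bitstr n"
    then have wt_eq: "2 * idot (xorv w y) y + wt w = wt y + wt (xorv w y)"
      using assms by (simp add: bitstr_def idot_xorv_wt)
    have "zeta m ^ (2 * idot (xorv w y) y)
        = zeta m ^ (2 * idot (xorv w y) y) * (zeta m * cnj (zeta m)) ^ wt w"
      by simp
    also have "\<dots> = zeta m ^ (2 * idot (xorv w y) y + wt w) * cnj (zeta m) ^ wt w"
      by (simp only: power_mult_distrib power_add mult.assoc)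
    also have "\<dots> = zeta m ^ wt y * zeta m ^ wt (xorv w y) * cnj (zeta m) ^ wt w"
      by (simp add: wt_eq power_add)
    finally show "sgnb (f (xorv w y) \<noteq> g w) * zeta m ^ (2 * idot (xorv w y) y)
        = zeta m ^ wt y * cross_term m f g y w"
      by (simp only: cross_term_def sgnb_xor) (simp add: mult_ac)
  qed
  also have "\<dots> = zeta m ^ wt y * (\<Sum>w\<in>bitstr n. cross_term m f g y w)"
    by (simp add: sum_distrib_left)
  finally show ?thesis .
qed

lemma A33_state_at_zero:
  assumes "length y = n"
  shows "A33_state m n (\<lambda>x. bdot x y) f g (replicate n False)
       = (1 / 2) ^ n * (\<Sum>w\<in>bitstr n. cross_term m f g y w)"
proof -
  have "A33_state m n (\<lambda>x. bdot x y) f g (replicate n False)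
      = (\<Sum>w\<in>bitstr n. inv_sqrt2 ^ n * cnj (zeta m) ^ wt w *
           (sgnb (g w) * (inv_sqrt2 ^ n * sgnb (f (xorv w y)) * zeta m ^ wt (xorv w y))))"
    unfolding A33_state_def tensor_hadamard_ket0 tensor_omega_bar_at_zero
    by (intro sum.cong refl)
       (use assms in \<open>simp add: tensor_hadamard_bdot_omega_const bitstr_def\<close>)
  also have "\<dots> = (\<Sum>w\<in>bitstr n. (inv_sqrt2 * inv_sqrt2) ^ n * cross_term m f g y w)"
    by (simp add: cross_term_def power_mult_distrib mult_ac)
  also have "\<dots> = (1 / 2) ^ n * (\<Sum>w\<in>bitstr n. cross_term m f g y w)"
    by (simp add: inv_sqrt2_sq sum_distrib_left)
  finally show ?thesis .
qed

lemma A23_state_False: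
  assumes "length y = n" "length w = n"
  shows "A23_state m n (\<lambda>x. bdot x y) f g False w
       = inv_sqrt2 ^ (n + 2) *
           (sgnb (f (xorv w y)) * zeta m ^ wt (xorv w y) + sgnb (g w) * zeta m ^ wt w)"
proof -
  have "ket_plus_ket0 n c = (\<lambda>x. inv_sqrt2 * ket0 n x)" for c
    by (simp add: ket_plus_ket0_def inv_sqrt2_def)
  then have "reg_apply (tensor_apply n hadamard) (ket_plus_ket0 n) = (\<lambda>_ _. inv_sqrt2 * inv_sqrt2 ^ n)"
    by (simp add: reg_apply_def tensor_apply_scale tensor_hadamard_ket0)
  then show ?thesis
    unfolding A23_state_def
    using assms
    by (simp add: drive_apply_def controlled_def UNIV_bool tensor_hadamard_bdot_omega_const
        tensor_sgate_const; simp add: hadamard_def inv_sqrt2_def algebra_simps)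
qed

lemma drive_prob_A23_False:
  assumes "length y = n"
  shows "drive_prob n (A23_state m n (\<lambda>x. bdot x y) f g) False
       = (1 + Re (\<Sum>w\<in>bitstr n. cross_term m f g y w) / 2 ^ n) / 2"
proof -
  have amp_sq: "(cmod (A23_state m n (\<lambda>x. bdot x y) f g False w))\<^sup>2
      = (1 / 2) ^ (n + 2) * (2 + 2 * Re (cross_term m f g y w))" if "w \<in> bitstr n" for w
  proof -
    let ?a = "sgnb (f (xorv w y)) * zeta m ^ wt (xorv w y)"
    let ?b = "sgnb (g w) * zeta m ^ wt w"
    have "cmod ?a = 1" "cmod ?b = 1"
      by (simp_all add: norm_mult norm_power)
    then have "(cmod (?a + ?b))\<^sup>2 = 2 + 2 * Re (cross_term m f g y w)"
      unfolding cross_term_def by (rule norm_add_sq_unit)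
    moreover have "(cmod (A23_state m n (\<lambda>x. bdot x y) f g False w))\<^sup>2
        = (cmod (inv_sqrt2 ^ (n + 2)))\<^sup>2 * (cmod (?a + ?b))\<^sup>2"
      using that assms by (simp add: A23_state_False bitstr_def norm_mult power_mult_distrib)
    ultimately show ?thesis
      by (simp only: norm_inv_sqrt2_power_sq)
  qed
  have "drive_prob n (A23_state m n (\<lambda>x. bdot x y) f g) False
      = (\<Sum>w\<in>bitstr n. (1 / 2) ^ (n + 2) * (2 + 2 * Re (cross_term m f g y w)))"
    unfolding drive_prob_def by (rule sum.cong[OF refl]) (rule amp_sq)
  also have "\<dots> = (1 / 2) ^ (n + 2) * (2 * 2 ^ n + 2 * Re (\<Sum>w\<in>bitstr n. cross_term m f g y w))"
    unfolding sum_distrib_left[symmetric]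
    by (simp add: sum.distrib card_bitstr Re_sum flip: sum_distrib_left)
  also have "\<dots> = (1 + Re (\<Sum>w\<in>bitstr n. cross_term m f g y w) / 2 ^ n) / 2"
    by (simp add: field_simps power_add)
  finally show ?thesis .
qed

theorem theorem8:
  fixes n m :: nat and f g :: "bool list \<Rightarrow> bool" and y :: "bool list"
  assumes "m > 0" and "length y = n"
  defines "h \<equiv> (\<lambda>x. bdot x y)"
  shows "meas_prob n (A33_state m n h f g) (replicate n False)
           = (cmod (crosscorr n m f g y))\<^sup>2 / 2 ^ (2 * n)
         \<and> drive_prob n (A23_state m n h f g) False
           = (1 + Re (zeta m powi (- int (wt y)) * crosscorr n m f g y / 2 ^ n)) / 2"
proof
  (* m > 0 is not needed: the junk value zeta 0 = 1 satisfies the same identities. *)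
  define K where "K = (\<Sum>w\<in>bitstr n. cross_term m f g y w)"
  have C: "crosscorr n m f g y = zeta m ^ wt y * K"
    unfolding K_def using assms(2) by (rule crosscorr_eq_sum_cross_term)
  show "meas_prob n (A33_state m n h f g) (replicate n False)
      = (cmod (crosscorr n m f g y))\<^sup>2 / 2 ^ (2 * n)"
    unfolding meas_prob_def h_def A33_state_at_zero[OF assms(2)] K_def[symmetric] C
    by (simp add: norm_mult norm_divide norm_power power_divide mult.commute flip: power_mult)
  have "zeta m powi (- int (wt y)) * crosscorr n m f g y / 2 ^ n = K / 2 ^ n"
    by (simp add: C power_int_minus zeta_nonzero)
  then show "drive_prob n (A23_state m n h f g) False
      = (1 + Re (zeta m powi (- int (wt y)) * crosscorr n m f g y / 2 ^ n)) / 2"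
    unfolding h_def drive_prob_A23_False[OF assms(2)] K_def[symmetric] by simp
qed

end
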